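(* Let $q$ be a prime dividing $|L/N|$, let $L_q\le L$ be such that $L_q/N$ is a Sylow $q$-subgroup of $L/N$, and let $\mu\in Z^1(L_q/N,F_K)$. Suppose there exists a function $\omega_q:K/N\to W_{(q)}$ such that for every $g\in L_q$ we have $\mu(gN)_{(q)}={}^g\omega_q\,\omega_q^{-1}\,\nu_g$ for some $\nu_g\in\Gamma$. Then $\bar\mu:L_q/N\to F_K/\Gamma$, $gN\mapsto\mu(gN)\Gamma$, is a 1-coboundary, i.e. there exists $\omega\in F_K$ with $\mu(gN)\Gamma={}^g\omega\,\omega^{-1}\Gamma$ for all $g\in L_q$.
   Context: $G$ is a profinite group, $N$ a finite index normal pro-$p$ subgroup of $G$, and $N\le K\trianglelefteq L\le G$; $\Gamma$ is a subgroup of $\mathrm{Lin}(K/N)$, the group of continuous homomorphisms $K\to\mathbb{C}^\times$ trivial on $N$. $F_K$ is the group (pointwise multiplication) of functions $K/N\to\mathbb{C}^\times$, with $L/N$ acting by ${}^gf(xN)=f(g^{-1}xgN)$. $W\le\mathbb{C}^\times$ is the group of roots of unity and $W_{(\ell)}$ its $\ell$-primary component. For each prime $\ell$ a homomorphism $\pi_\ell:\mathbb{C}^\times\to W_{(\ell)}$ restricting to the identity on $W_{(\ell)}$ is fixed, and for a function $f$ with values in $\mathbb{C}^\times$, $f_{(\ell)}:=\pi_\ell\circ f$; thus ${}^g(f_{(\ell)})=({}^gf)_{(\ell)}$. *)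

theory Defs
  imports Complex_Main "HOL-Algebra.Coset" "HOL-Computational_Algebra.Primes"
begin

definition quot :: "('a, 'b) monoid_scheme \<Rightarrow> 'a set \<Rightarrow> 'a set \<Rightarrow> 'a set set" where
  "quot G H N = {N #>\<^bsub>G\<^esub> x | x. x \<in> H}"

definition Wpart :: "nat \<Rightarrow> complex set" where
  "Wpart l = {z. \<exists>k. z ^ (l ^ k) = 1}"

definition Lin :: "('a, 'b) monoid_scheme \<Rightarrow> 'a set \<Rightarrow> 'a set \<Rightarrow> ('a set \<Rightarrow> complex) set" where
  "Lin G K N = {\<gamma> \<in> extensional (quot G K N).
      (\<forall>X\<in>quot G K N. \<gamma> X \<noteq> 0) \<and>
      (\<forall>x\<in>K. \<forall>y\<in>K. \<gamma> (N #>\<^bsub>G\<^esub> (x \<otimes>\<^bsub>G\<^esub> y)) = \<gamma> (N #>\<^bsub>G\<^esub> x) * \<gamma> (N #>\<^bsub>G\<^esub> y))}"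

definition subgroup_Lin :: "('a, 'b) monoid_scheme \<Rightarrow> 'a set \<Rightarrow> 'a set \<Rightarrow> ('a set \<Rightarrow> complex) set \<Rightarrow> bool" where
  "subgroup_Lin G K N \<Gamma> \<longleftrightarrow> \<Gamma> \<subseteq> Lin G K N \<and>
     (\<lambda>X\<in>quot G K N. 1) \<in> \<Gamma> \<and>
     (\<forall>\<gamma>\<in>\<Gamma>. \<forall>\<delta>\<in>\<Gamma>. (\<lambda>X\<in>quot G K N. \<gamma> X * \<delta> X) \<in> \<Gamma>) \<and>
     (\<forall>\<gamma>\<in>\<Gamma>. (\<lambda>X\<in>quot G K N. inverse (\<gamma> X)) \<in> \<Gamma>)"

(* the action of L/N on F_K: (^g f)(xN) = f(g^{-1} x g N) *)
definition act :: "('a, 'b) monoid_scheme \<Rightarrow> 'a set \<Rightarrow> 'a \<Rightarrow> ('a set \<Rightarrow> complex) \<Rightarrow> 'a \<Rightarrow> complex" where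
  "act G N g f x = f (N #>\<^bsub>G\<^esub> (inv\<^bsub>G\<^esub> g \<otimes>\<^bsub>G\<^esub> x \<otimes>\<^bsub>G\<^esub> g))"

end

theory Submission
  imports Defs "HOL-Analysis.Complex_Transcendental"
begin

text \<open>
  Split mu as mu_(q) * mu', where mu' takes values in the kernel of pi. The kernel of pi in
  C^x is uniquely q-divisible: two q^m-th roots of one element differ by an element of W_(q),
  on which pi is the identity. Since |L_q/N| = q^m, the usual averaging argument applies: the
  product F of the values of mu' over L_q/N satisfies F = mu'(g)^(q^m) * (^g F), so the
  q^m-th root of F^-1 inside the kernel trivialises mu'. Multiplied by omega_q, it
  trivialises mu modulo Gamma.
\<close>

lemma Wpart_nonzero:
  assumes "q > 0" and "u \<in> Wpart q"
  shows "u \<noteq> 0"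
  using assms by (auto simp: Wpart_def zero_power)

lemma rcos_in_quot: "h \<in> H \<Longrightarrow> N #>\<^bsub>G\<^esub> h \<in> quot G H N"
  by (auto simp: quot_def)

lemma (in group) normal_in_subgroup_conj_closed:
  assumes "subgroup L G" and "K \<lhd> G\<lparr>carrier := L\<rparr>" and "g \<in> L" and "x \<in> K"
  shows "inv g \<otimes> x \<otimes> g \<in> K"
  using normal.inv_op_closed1[OF assms(2), of g x] assms m_inv_consistent[OF assms(1,3)] by simp

lemma (in normal) quot_left_translation_bij:
  assumes "subgroup L G" and "g \<in> L"
  shows "bij_betw (\<lambda>X. (H #> g) <#> X) (quot G L H) (quot G L H)"
proof (rule bij_betw_byWitness[where f' = "\<lambda>X. (H #> inv g) <#> X"])
  have L: "\<And>h. h \<in> L \<Longrightarrow> h \<in> carrier G" "inv g \<in> L"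
    using assms by (auto simp: subgroup.mem_carrier subgroup.m_inv_closed)
  have translate: "(H #> a) <#> (H #> h) = H #> (a \<otimes> h)" "a \<otimes> h \<in> L"
    if "a \<in> L" "h \<in> L" for a h
    using that L(1) assms(1) by (auto simp: rcos_sum subgroup.m_closed)
  show "\<forall>X\<in>quot G L H. (H #> inv g) <#> ((H #> g) <#> X) = X"
    using assms L translate by (auto simp: quot_def m_assoc[symmetric])
  show "\<forall>X\<in>quot G L H. (H #> g) <#> ((H #> inv g) <#> X) = X"
    using assms L translate by (auto simp: quot_def m_assoc[symmetric])
  show "(\<lambda>X. (H #> g) <#> X) ` quot G L H \<subseteq> quot G L H"
    using assms translate by (auto simp: quot_def)
  show "(\<lambda>X. (H #> inv g) <#> X) ` quot G L H \<subseteq> quot G L H"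
    using L translate by (auto simp: quot_def)
qed

lemma (in normal) cocycle_prod_quot:
  fixes c :: "'a set \<Rightarrow> 'a set \<Rightarrow> 'c :: comm_monoid_mult"
  assumes "subgroup L G" and "g \<in> L"
    and cocycle: "\<And>h. h \<in> L \<Longrightarrow> c (H #> (g \<otimes> h)) X = c (H #> g) X * c (H #> h) Y"
  shows "(\<Prod>A\<in>quot G L H. c A X) = c (H #> g) X ^ card (quot G L H) * (\<Prod>A\<in>quot G L H. c A Y)"
proof -
  have "(\<Prod>A\<in>quot G L H. c A X) = (\<Prod>A\<in>quot G L H. c ((H #> g) <#> A) X)"
    using prod.reindex_bij_betw[OF quot_left_translation_bij[OF assms(1,2)], of "\<lambda>A. c A X"]
    by simp
  also have "\<dots> = (\<Prod>A\<in>quot G L H. c (H #> g) X * c A Y)"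
  proof (rule prod.cong[OF refl])
    fix A assume "A \<in> quot G L H"
    then obtain h where "h \<in> L" "A = H #> h" by (auto simp: quot_def)
    moreover have "g \<in> carrier G" "h \<in> carrier G"
      using assms(1,2) \<open>h \<in> L\<close> subgroup.subset by blast+
    ultimately show "c ((H #> g) <#> A) X = c (H #> g) X * c A Y"
      by (simp add: rcos_sum cocycle)
  qed
  also have "\<dots> = c (H #> g) X ^ card (quot G L H) * (\<Prod>A\<in>quot G L H. c A Y)"
    by (simp add: prod.distrib)
  finally show ?thesis .
qed

locale primary_projection =
  fixes \<pi> :: "complex \<Rightarrow> complex" and q :: nat
  assumes proj_mult: "\<And>a b. a \<noteq> 0 \<Longrightarrow> b \<noteq> 0 \<Longrightarrow> \<pi> (a * b) = \<pi> a * \<pi> b"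
    and proj_in_Wpart: "\<And>a. a \<noteq> 0 \<Longrightarrow> \<pi> a \<in> Wpart q"
    and proj_Wpart: "\<And>w. w \<in> Wpart q \<Longrightarrow> \<pi> w = w"
    and q_pos: "q > 0"
begin

definition proj_ker :: "complex set" where
  "proj_ker = {a. a \<noteq> 0 \<and> \<pi> a = 1}"

definition ker_part :: "complex \<Rightarrow> complex" where
  "ker_part a = a * inverse (\<pi> a)"

lemma proj_one: "\<pi> 1 = 1"
  by (rule proj_Wpart) (auto simp: Wpart_def)

lemma proj_nonzero: "a \<noteq> 0 \<Longrightarrow> \<pi> a \<noteq> 0"
  using proj_in_Wpart Wpart_nonzero q_pos by blast

lemma proj_idem: "a \<noteq> 0 \<Longrightarrow> \<pi> (\<pi> a) = \<pi> a"
  by (simp add: proj_Wpart proj_in_Wpart)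

lemma proj_inverse:
  assumes "a \<noteq> 0"
  shows "\<pi> (inverse a) = inverse (\<pi> a)"
proof -
  have "\<pi> a * \<pi> (inverse a) = 1"
    using proj_mult[of a "inverse a"] assms by (simp add: proj_one)
  then show ?thesis by (rule inverse_unique[symmetric])
qed

lemma proj_power: "a \<noteq> 0 \<Longrightarrow> \<pi> (a ^ k) = \<pi> a ^ k"
  by (induction k) (simp_all add: proj_one proj_mult)

lemma proj_ker_mult: "a \<in> proj_ker \<Longrightarrow> b \<in> proj_ker \<Longrightarrow> a * b \<in> proj_ker"
  by (simp add: proj_ker_def proj_mult)

lemma proj_ker_inverse: "a \<in> proj_ker \<Longrightarrow> inverse a \<in> proj_ker"
  by (simp add: proj_ker_def proj_inverse)

lemma proj_ker_prod: "(\<And>x. x \<in> A \<Longrightarrow> f x \<in> proj_ker) \<Longrightarrow> prod f A \<in> proj_ker"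
proof (induction A rule: infinite_finite_induct)
  case (insert x F)
  then show ?case by (simp add: proj_ker_mult)
qed (simp_all add: proj_ker_def proj_one)

lemma ker_part_in_proj_ker: "a \<noteq> 0 \<Longrightarrow> ker_part a \<in> proj_ker"
  by (simp add: proj_ker_def ker_part_def proj_mult proj_nonzero proj_inverse proj_idem)

lemma proj_times_ker_part: "a \<noteq> 0 \<Longrightarrow> \<pi> a * ker_part a = a"
  by (simp add: ker_part_def proj_nonzero)

lemma ker_part_mult: "a \<noteq> 0 \<Longrightarrow> b \<noteq> 0 \<Longrightarrow> ker_part (a * b) = ker_part a * ker_part b"
  by (simp add: ker_part_def proj_mult)

lemma ker_part_power: "a \<noteq> 0 \<Longrightarrow> ker_part (a ^ k) = ker_part a ^ k"
  by (simp add: ker_part_def proj_power power_mult_distrib power_inverse)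

lemma proj_ker_root_exists:
  assumes "z \<in> proj_ker"
  shows "\<exists>w\<in>proj_ker. w ^ (q ^ m) = z"
proof -
  obtain w where "w \<noteq> 0" "z = w ^ (q ^ m)"
    using exists_complex_root_nonzero[of z "q ^ m"] assms q_pos by (auto simp: proj_ker_def)
  then have "ker_part w ^ (q ^ m) = ker_part z"
    by (simp add: ker_part_power)
  also have "ker_part z = z"
    using assms by (simp add: proj_ker_def ker_part_def)
  finally show ?thesis
    using ker_part_in_proj_ker \<open>w \<noteq> 0\<close> by blast
qed

lemma proj_ker_power_inj:
  assumes "a \<in> proj_ker" "b \<in> proj_ker" and "a ^ (q ^ m) = b ^ (q ^ m)"
  shows "a = b"
proof -
  have "(a * inverse b) ^ (q ^ m) = 1"
    using assms by (simp add: proj_ker_def power_mult_distrib power_inverse)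
  then have "\<pi> (a * inverse b) = a * inverse b"
    by (intro proj_Wpart) (auto simp: Wpart_def)
  moreover have "a * inverse b \<in> proj_ker"
    using assms by (simp add: proj_ker_mult proj_ker_inverse)
  ultimately show ?thesis
    using assms(2) by (simp add: proj_ker_def field_simps)
qed

lemma proj_ker_cocycle_coboundary:
  assumes "N \<lhd> G" and "subgroup H G"
    and conj: "\<And>g x. g \<in> H \<Longrightarrow> x \<in> K \<Longrightarrow> inv\<^bsub>G\<^esub> g \<otimes>\<^bsub>G\<^esub> x \<otimes>\<^bsub>G\<^esub> g \<in> K"
    and card: "card (quot G H N) = q ^ m"
    and c_ker: "\<And>A X. A \<in> quot G H N \<Longrightarrow> X \<in> quot G K N \<Longrightarrow> c A X \<in> proj_ker"
    and cocycle: "\<And>g h x. g \<in> H \<Longrightarrow> h \<in> H \<Longrightarrow> x \<in> K \<Longrightarrow>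
        c (N #>\<^bsub>G\<^esub> (g \<otimes>\<^bsub>G\<^esub> h)) (N #>\<^bsub>G\<^esub> x)
          = c (N #>\<^bsub>G\<^esub> g) (N #>\<^bsub>G\<^esub> x) * act G N g (c (N #>\<^bsub>G\<^esub> h)) x"
  shows "\<exists>\<omega>. (\<forall>X\<in>quot G K N. \<omega> X \<in> proj_ker) \<and>
     (\<forall>g\<in>H. \<forall>x\<in>K. c (N #>\<^bsub>G\<^esub> g) (N #>\<^bsub>G\<^esub> x) = act G N g \<omega> x * inverse (\<omega> (N #>\<^bsub>G\<^esub> x)))"
proof -
  define F where "F X = (\<Prod>A\<in>quot G H N. c A X)" for X
  have F_ker: "F X \<in> proj_ker" if "X \<in> quot G K N" for X
    unfolding F_def using c_ker that by (intro proj_ker_prod)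
  have "\<forall>X\<in>quot G K N. \<exists>w\<in>proj_ker. w ^ (q ^ m) = inverse (F X)"
    using F_ker proj_ker_inverse proj_ker_root_exists by blast
  then obtain \<omega> where \<omega>: "\<And>X. X \<in> quot G K N \<Longrightarrow> \<omega> X \<in> proj_ker \<and> \<omega> X ^ (q ^ m) = inverse (F X)"
    by metis
  have "c (N #>\<^bsub>G\<^esub> g) (N #>\<^bsub>G\<^esub> x) = act G N g \<omega> x * inverse (\<omega> (N #>\<^bsub>G\<^esub> x))"
    if g: "g \<in> H" and x: "x \<in> K" for g x
  proof -
    define X Y a where "X = N #>\<^bsub>G\<^esub> x" and "Y = N #>\<^bsub>G\<^esub> (inv\<^bsub>G\<^esub> g \<otimes>\<^bsub>G\<^esub> x \<otimes>\<^bsub>G\<^esub> g)"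
      and "a = c (N #>\<^bsub>G\<^esub> g) X"
    have XY: "X \<in> quot G K N" "Y \<in> quot G K N"
      using conj[OF g x] x by (simp_all add: X_def Y_def rcos_in_quot)
    have "F X = a ^ (q ^ m) * F Y"
      using normal.cocycle_prod_quot[OF \<open>N \<lhd> G\<close> \<open>subgroup H G\<close> g, of c X Y] cocycle[OF g _ x]
      by (simp add: F_def X_def Y_def a_def act_def card)
    moreover have "(\<omega> Y * inverse (\<omega> X)) ^ (q ^ m) = inverse (F Y) * F X"
      using \<omega>[OF XY(1)] \<omega>[OF XY(2)] by (simp add: power_mult_distrib power_inverse)
    ultimately have powers: "a ^ (q ^ m) = (\<omega> Y * inverse (\<omega> X)) ^ (q ^ m)"
      using F_ker[OF XY(2)] by (simp add: proj_ker_def)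
    have "a \<in> proj_ker"
      using c_ker[OF rcos_in_quot[OF g] XY(1)] by (simp add: a_def)
    moreover have "\<omega> Y * inverse (\<omega> X) \<in> proj_ker"
      using \<omega> XY by (intro proj_ker_mult proj_ker_inverse) blast+
    ultimately have "a = \<omega> Y * inverse (\<omega> X)"
      using powers by (rule proj_ker_power_inj)
    then show ?thesis
      by (simp add: a_def X_def Y_def act_def)
  qed
  then show ?thesis
    using \<omega> by blast
qed

lemma ker_part_cocycle_coboundary:
  assumes "N \<lhd> G" and "subgroup H G"
    and conj: "\<And>g x. g \<in> H \<Longrightarrow> x \<in> K \<Longrightarrow> inv\<^bsub>G\<^esub> g \<otimes>\<^bsub>G\<^esub> x \<otimes>\<^bsub>G\<^esub> g \<in> K"
    and card: "card (quot G H N) = q ^ m"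
    and nonzero: "\<And>A X. A \<in> quot G H N \<Longrightarrow> X \<in> quot G K N \<Longrightarrow> \<mu> A X \<noteq> 0"
    and cocycle: "\<And>g h x. g \<in> H \<Longrightarrow> h \<in> H \<Longrightarrow> x \<in> K \<Longrightarrow>
        \<mu> (N #>\<^bsub>G\<^esub> (g \<otimes>\<^bsub>G\<^esub> h)) (N #>\<^bsub>G\<^esub> x)
          = \<mu> (N #>\<^bsub>G\<^esub> g) (N #>\<^bsub>G\<^esub> x) * act G N g (\<mu> (N #>\<^bsub>G\<^esub> h)) x"
  shows "\<exists>\<omega>. (\<forall>X\<in>quot G K N. \<omega> X \<in> proj_ker) \<and>
     (\<forall>g\<in>H. \<forall>x\<in>K. ker_part (\<mu> (N #>\<^bsub>G\<^esub> g) (N #>\<^bsub>G\<^esub> x))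
        = act G N g \<omega> x * inverse (\<omega> (N #>\<^bsub>G\<^esub> x)))"
proof (rule proj_ker_cocycle_coboundary[OF assms(1,2) conj card, where c = "\<lambda>A X. ker_part (\<mu> A X)"])
  show "ker_part (\<mu> A X) \<in> proj_ker" if "A \<in> quot G H N" "X \<in> quot G K N" for A X
    using nonzero[OF that] by (rule ker_part_in_proj_ker)
  show "ker_part (\<mu> (N #>\<^bsub>G\<^esub> (g \<otimes>\<^bsub>G\<^esub> h)) (N #>\<^bsub>G\<^esub> x))
      = ker_part (\<mu> (N #>\<^bsub>G\<^esub> g) (N #>\<^bsub>G\<^esub> x)) * act G N g (\<lambda>X. ker_part (\<mu> (N #>\<^bsub>G\<^esub> h) X)) x"
    if "g \<in> H" "h \<in> H" "x \<in> K" for g h x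
  proof -
    have "\<mu> (N #>\<^bsub>G\<^esub> g) (N #>\<^bsub>G\<^esub> x) \<noteq> 0"
      and "\<mu> (N #>\<^bsub>G\<^esub> h) (N #>\<^bsub>G\<^esub> (inv\<^bsub>G\<^esub> g \<otimes>\<^bsub>G\<^esub> x \<otimes>\<^bsub>G\<^esub> g)) \<noteq> 0"
      using that conj[of g x] by (simp_all add: nonzero rcos_in_quot)
    then show ?thesis
      using cocycle[OF that] by (simp add: act_def ker_part_mult)
  qed
qed

end

theorem lemma3p2:
  fixes G :: "('a, 'b) monoid_scheme"
    and N K L Lq :: "'a set"
    and \<Gamma> :: "('a set \<Rightarrow> complex) set"
    and \<pi> :: "complex \<Rightarrow> complex"
    and q :: nat
    and \<mu> :: "'a set \<Rightarrow> 'a set \<Rightarrow> complex"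
    and \<omega>q :: "'a set \<Rightarrow> complex"
  assumes grp: "group G"
    and N_normal: "N \<lhd> G"
    and N_fin_index: "finite (rcosets\<^bsub>G\<^esub> N)"
    and L_sub: "subgroup L G"
    and K_sub: "subgroup K G"
    and NK: "N \<subseteq> K"
    and K_normal_L: "K \<lhd> (G\<lparr>carrier := L\<rparr>)"
    and Gamma: "subgroup_Lin G K N \<Gamma>"
    and pi_hom: "\<And>a b. a \<noteq> 0 \<Longrightarrow> b \<noteq> 0 \<Longrightarrow> \<pi> (a * b) = \<pi> a * \<pi> b"
    and pi_range: "\<And>a. a \<noteq> 0 \<Longrightarrow> \<pi> a \<in> Wpart q"
    and pi_id: "\<And>w. w \<in> Wpart q \<Longrightarrow> \<pi> w = w"
    and q_prime: "prime q"
    and q_dvd: "q dvd card (quot G L N)"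
    and Lq_sub: "subgroup Lq G"
    and NLq: "N \<subseteq> Lq"
    and LqL: "Lq \<subseteq> L"
    and Lq_sylow: "card (quot G Lq N) = q ^ multiplicity q (card (quot G L N))"
    and mu_val: "\<And>A X. A \<in> quot G Lq N \<Longrightarrow> X \<in> quot G K N \<Longrightarrow> \<mu> A X \<noteq> 0"
    and mu_cocycle: "\<And>g h x. g \<in> Lq \<Longrightarrow> h \<in> Lq \<Longrightarrow> x \<in> K \<Longrightarrow>
        \<mu> (N #>\<^bsub>G\<^esub> (g \<otimes>\<^bsub>G\<^esub> h)) (N #>\<^bsub>G\<^esub> x)
          = \<mu> (N #>\<^bsub>G\<^esub> g) (N #>\<^bsub>G\<^esub> x) * act G N g (\<mu> (N #>\<^bsub>G\<^esub> h)) x"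
    and omq_val: "\<And>X. X \<in> quot G K N \<Longrightarrow> \<omega>q X \<in> Wpart q"
    and omq: "\<And>g. g \<in> Lq \<Longrightarrow> \<exists>\<nu>\<in>\<Gamma>. \<forall>x\<in>K.
        \<pi> (\<mu> (N #>\<^bsub>G\<^esub> g) (N #>\<^bsub>G\<^esub> x))
          = act G N g \<omega>q x * inverse (\<omega>q (N #>\<^bsub>G\<^esub> x)) * \<nu> (N #>\<^bsub>G\<^esub> x)"
  shows "\<exists>\<omega>. (\<forall>X\<in>quot G K N. \<omega> X \<noteq> 0) \<and>
     (\<forall>g\<in>Lq. \<exists>\<gamma>\<in>\<Gamma>. \<forall>x\<in>K.
        \<mu> (N #>\<^bsub>G\<^esub> g) (N #>\<^bsub>G\<^esub> x)
          = act G N g \<omega> x * inverse (\<omega> (N #>\<^bsub>G\<^esub> x)) * \<gamma> (N #>\<^bsub>G\<^esub> x))"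
proof -
  interpret primary_projection \<pi> q
    using pi_hom pi_range pi_id prime_gt_0_nat[OF q_prime] by unfold_locales
  have conj: "\<And>g x. g \<in> Lq \<Longrightarrow> x \<in> K \<Longrightarrow> inv\<^bsub>G\<^esub> g \<otimes>\<^bsub>G\<^esub> x \<otimes>\<^bsub>G\<^esub> g \<in> K"
    using group.normal_in_subgroup_conj_closed[OF grp L_sub K_normal_L] LqL by blast
  obtain \<omega>' where \<omega>'_ker: "\<And>X. X \<in> quot G K N \<Longrightarrow> \<omega>' X \<in> proj_ker"
    and \<omega>': "\<And>g x. g \<in> Lq \<Longrightarrow> x \<in> K \<Longrightarrow> ker_part (\<mu> (N #>\<^bsub>G\<^esub> g) (N #>\<^bsub>G\<^esub> x))
        = act G N g \<omega>' x * inverse (\<omega>' (N #>\<^bsub>G\<^esub> x))"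
    using ker_part_cocycle_coboundary[OF N_normal Lq_sub conj Lq_sylow mu_val mu_cocycle] by blast
  show ?thesis
  proof (intro exI[of _ "\<lambda>X. \<omega>q X * \<omega>' X"] conjI ballI)
    show "\<omega>q X * \<omega>' X \<noteq> 0" if "X \<in> quot G K N" for X
      using Wpart_nonzero[OF q_pos omq_val[OF that]] \<omega>'_ker[OF that] by (simp add: proj_ker_def)
  next
    fix g assume g: "g \<in> Lq"
    have "\<mu> (N #>\<^bsub>G\<^esub> g) (N #>\<^bsub>G\<^esub> x)
        = \<pi> (\<mu> (N #>\<^bsub>G\<^esub> g) (N #>\<^bsub>G\<^esub> x)) * (act G N g \<omega>' x * inverse (\<omega>' (N #>\<^bsub>G\<^esub> x)))"
      if "x \<in> K" for x
      using proj_times_ker_part[OF mu_val[OF rcos_in_quot[OF g] rcos_in_quot[OF that]]] \<omega>'[OF g that]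
      by simp
    with omq[OF g] show "\<exists>\<gamma>\<in>\<Gamma>. \<forall>x\<in>K. \<mu> (N #>\<^bsub>G\<^esub> g) (N #>\<^bsub>G\<^esub> x)
        = act G N g (\<lambda>X. \<omega>q X * \<omega>' X) x * inverse (\<omega>q (N #>\<^bsub>G\<^esub> x) * \<omega>' (N #>\<^bsub>G\<^esub> x)) * \<gamma> (N #>\<^bsub>G\<^esub> x)"
      by (auto simp: act_def inverse_mult_distrib mult_ac)
  qed
qed

end
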